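(* For every $e\ge1$, the subgroup $\hat G^{(e)}\subseteq\mathrm{Aut}(X_{PGL_2(F)})$ is weakly two-transitive: for any vertices $x_1,x_2,y_1,y_2$ with $d(x_1,x_2)=d(y_1,y_2)$ there exists $g\in \hat G^{(e)}$ with $g(x_1)=y_1$ and $g(x_2)=y_2$.
   Context: Let $F$ be a non-archimedean local field with ring of integers $\mathfrak{o}$, uniformizer $\varpi$, and finite residue field of cardinality $q$. $X=X_{PGL_2(F)}$ is the Bruhat–Tits tree of $PGL_2(F)$: its vertices are homothety classes $[L]$ (under $F^\times$) of $\mathfrak{o}$-lattices $L\subset F^2$, and $[L],[L']$ are joined by an edge iff there are representatives with $\varpi L\subsetneq L'\subsetneq L$; it is a $(q+1)$-regular tree. $d$ is the path-length distance on vertices; $\mathrm{Aut}(X)$ is the group of distance-preserving bijections of the vertex set, with the topology of pointwise convergence. $GL_2(F)$ acts on lattices through its linear action on $F^2$, the centre acts trivially, and this gives an embedding $PGL_2(F)\hookrightarrow\mathrm{Aut}(X)$. For an edge $\eta=\{x_1,x_2\}$ and $e\ge1$, $B(\eta,e)=\{y: \min(d(y,x_1),d(y,x_2))\le e\}$. Define $\hat G^{(e)}=\{g\in\mathrm{Aut}(X):\ \text{for every edge }\eta\ \text{there is } g'\in PGL_2(F)\text{ with } g|_{B(\eta,e)}=g'|_{B(\eta,e)}\}$. *)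

theory Defs
  imports Main
begin

text \<open>A valuation v on the nonzero elements of a field (the value at 0 is irrelevant).\<close>
definition discrete_valuation :: "('a::field \<Rightarrow> int) \<Rightarrow> bool" where
  "discrete_valuation v \<longleftrightarrow>
     (\<forall>x y. x \<noteq> 0 \<longrightarrow> y \<noteq> 0 \<longrightarrow> v (x * y) = v x + v y) \<and>
     (\<forall>x y. x \<noteq> 0 \<longrightarrow> y \<noteq> 0 \<longrightarrow> x + y \<noteq> 0 \<longrightarrow> v (x + y) \<ge> min (v x) (v y)) \<and>
     (\<forall>n. \<exists>x. x \<noteq> 0 \<and> v x = n)"

definition val_ring :: "('a::field \<Rightarrow> int) \<Rightarrow> 'a set" where
  "val_ring v = {x. x = 0 \<or> v x \<ge> 0}"

definition val_complete :: "('a::field \<Rightarrow> int) \<Rightarrow> bool" where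
  "val_complete v \<longleftrightarrow>
     (\<forall>X :: nat \<Rightarrow> 'a.
        (\<forall>N::int. \<exists>M. \<forall>m\<ge>M. \<forall>n\<ge>M. X m = X n \<or> v (X m - X n) \<ge> N) \<longrightarrow>
        (\<exists>l. \<forall>N::int. \<exists>M. \<forall>n\<ge>M. X n = l \<or> v (X n - l) \<ge> N))"

text \<open>Residue field o/m, as the quotient of o by congruence modulo the maximal ideal.\<close>
definition residue_rel :: "('a::field \<Rightarrow> int) \<Rightarrow> ('a \<times> 'a) set" where
  "residue_rel v = {(x, y). x \<in> val_ring v \<and> y \<in> val_ring v \<and> (x = y \<or> v (x - y) > 0)}"

definition nonarch_local_field :: "('a::field \<Rightarrow> int) \<Rightarrow> bool" where
  "nonarch_local_field v \<longleftrightarrow>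
     discrete_valuation v \<and> val_complete v \<and> finite (val_ring v // residue_rel v)"

definition is_lattice :: "('a::field \<Rightarrow> int) \<Rightarrow> ('a \<times> 'a) set \<Rightarrow> bool" where
  "is_lattice v L \<longleftrightarrow>
     (\<exists>u1 u2 w1 w2. u1 * w2 - u2 * w1 \<noteq> 0 \<and>
        L = {(a * u1 + b * w1, a * u2 + b * w2) | a b. a \<in> val_ring v \<and> b \<in> val_ring v})"

definition scale_lat :: "'a::field \<Rightarrow> ('a \<times> 'a) set \<Rightarrow> ('a \<times> 'a) set" where
  "scale_lat c L = (\<lambda>(x, y). (c * x, c * y)) ` L"

definition lat_class :: "('a::field \<Rightarrow> int) \<Rightarrow> ('a \<times> 'a) set \<Rightarrow> ('a \<times> 'a) set set" where
  "lat_class v L = {scale_lat c L | c. c \<noteq> 0}"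

definition BT_vertices :: "('a::field \<Rightarrow> int) \<Rightarrow> ('a \<times> 'a) set set set" where
  "BT_vertices v = {lat_class v L | L. is_lattice v L}"

definition BT_adj :: "('a::field \<Rightarrow> int) \<Rightarrow> ('a \<times> 'a) set set \<Rightarrow> ('a \<times> 'a) set set \<Rightarrow> bool" where
  "BT_adj v x y \<longleftrightarrow> x \<in> BT_vertices v \<and> y \<in> BT_vertices v \<and>
     (\<exists>L \<in> x. \<exists>L' \<in> y. \<exists>p. p \<noteq> 0 \<and> v p = 1 \<and> scale_lat p L \<subset> L' \<and> L' \<subset> L)"

definition BT_dist :: "('a::field \<Rightarrow> int) \<Rightarrow> ('a \<times> 'a) set set \<Rightarrow> ('a \<times> 'a) set set \<Rightarrow> nat" where
  "BT_dist v x y = (LEAST n. \<exists>f :: nat \<Rightarrow> ('a \<times> 'a) set set.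
       f 0 = x \<and> f n = y \<and> (\<forall>i<n. BT_adj v (f i) (f (Suc i))))"

definition BT_Aut :: "('a::field \<Rightarrow> int) \<Rightarrow> (('a \<times> 'a) set set \<Rightarrow> ('a \<times> 'a) set set) set" where
  "BT_Aut v = {g. bij_betw g (BT_vertices v) (BT_vertices v) \<and>
     (\<forall>x \<in> BT_vertices v. \<forall>y \<in> BT_vertices v. BT_dist v (g x) (g y) = BT_dist v x y)}"

text \<open>A 2x2 matrix (a, b, c, d) = [[a, b], [c, d]].\<close>
type_synonym 'a mat2 = "'a \<times> 'a \<times> 'a \<times> 'a"

definition mat2_det :: "'a::field mat2 \<Rightarrow> 'a" where
  "mat2_det M = (case M of (a, b, c, d) \<Rightarrow> a * d - b * c)"

definition mat2_apply :: "'a::field mat2 \<Rightarrow> 'a \<times> 'a \<Rightarrow> 'a \<times> 'a" where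
  "mat2_apply M z = (case M of (a, b, c, d) \<Rightarrow> case z of (x, y) \<Rightarrow> (a * x + b * y, c * x + d * y))"

definition GL2_act_vertex :: "'a::field mat2 \<Rightarrow> ('a \<times> 'a) set set \<Rightarrow> ('a \<times> 'a) set set" where
  "GL2_act_vertex M x = (\<lambda>L. mat2_apply M ` L) ` x"

definition edge_ball :: "('a::field \<Rightarrow> int) \<Rightarrow> ('a \<times> 'a) set set \<Rightarrow> ('a \<times> 'a) set set \<Rightarrow> nat
    \<Rightarrow> ('a \<times> 'a) set set set" where
  "edge_ball v x1 x2 e = {y \<in> BT_vertices v. min (BT_dist v y x1) (BT_dist v y x2) \<le> e}"

definition G_hat :: "('a::field \<Rightarrow> int) \<Rightarrow> nat \<Rightarrow> (('a \<times> 'a) set set \<Rightarrow> ('a \<times> 'a) set set) set" where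
  "G_hat v e = {g \<in> BT_Aut v. \<forall>x1 x2. BT_adj v x1 x2 \<longrightarrow>
     (\<exists>M. mat2_det M \<noteq> 0 \<and> (\<forall>y \<in> edge_ball v x1 x2 e. g y = GL2_act_vertex M y))}"

end

theory Submission
  imports Defs
begin

text \<open>A lattice \<open>A \<o>\<^sup>2\<close> is described by an invertible matrix \<open>A\<close>; two matrices describe
  the same vertex iff they differ by a scalar and a right factor in \<open>GL\<^sub>2(\<o>)\<close>. By the Cartan
  (Smith normal form) decomposition every \<open>A\<^sup>-\<^sup>1 B\<close> is \<open>c P diag(1, t) Q\<close> with
  \<open>P, Q \<in> GL\<^sub>2(\<o>)\<close> and \<open>v t = k \<ge> 0\<close>, so some element of \<open>GL\<^sub>2(F)\<close> maps the standard pair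
  \<open>([\<o>\<^sup>2], [diag(1, \<pi>\<^sup>k) \<o>\<^sup>2])\<close> to \<open>([A \<o>\<^sup>2], [B \<o>\<^sup>2])\<close>. The number
  \<open>k = v(det X) - 2 min\<^sub>i\<^sub>j v(X\<^sub>i\<^sub>j)\<close> for \<open>X = A\<^sup>-\<^sup>1 B\<close> depends only on the two vertices,
  is at most one for adjacent vertices and is subadditive, so it bounds the distance from below;
  the path through the vertices \<open>[diag(1, \<pi>\<^sup>i) \<o>\<^sup>2]\<close> shows it is the distance. Thus
  \<open>GL\<^sub>2(F)\<close>, which lies in every \<open>G_hat v e\<close> since a global element agrees with itself on
  every ball, is transitive on pairs of vertices at a given distance.\<close>

section \<open>Discrete valuations\<close>

text \<open>\<open>vge v k x\<close> means \<open>v x \<ge> k\<close>, with \<open>0\<close> treated as having valuation \<open>\<infinity>\<close>: the value \<open>v 0\<close> is junk.\<close>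
definition vge :: "('a::field \<Rightarrow> int) \<Rightarrow> int \<Rightarrow> 'a \<Rightarrow> bool" where
  "vge v k x \<longleftrightarrow> x = 0 \<or> k \<le> v x"

locale discretely_valued =
  fixes v :: "'a::field \<Rightarrow> int"
  assumes discrete_valuation: "discrete_valuation v"
begin

lemma v_mult: "x \<noteq> 0 \<Longrightarrow> y \<noteq> 0 \<Longrightarrow> v (x * y) = v x + v y"
  using discrete_valuation unfolding discrete_valuation_def by blast

lemma v_add: "x \<noteq> 0 \<Longrightarrow> y \<noteq> 0 \<Longrightarrow> x + y \<noteq> 0 \<Longrightarrow> min (v x) (v y) \<le> v (x + y)"
  using discrete_valuation unfolding discrete_valuation_def by blast

lemma v_surj: "\<exists>x. x \<noteq> 0 \<and> v x = n"
  using discrete_valuation unfolding discrete_valuation_def by blast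

lemma v_one [simp]: "v 1 = 0"
  using v_mult[of 1 1] by simp

lemma v_inverse: "x \<noteq> 0 \<Longrightarrow> v (inverse x) = - v x"
  using v_mult[of x "inverse x"] by simp

lemma v_divide: "x \<noteq> 0 \<Longrightarrow> y \<noteq> 0 \<Longrightarrow> v (x / y) = v x - v y"
  by (simp add: divide_inverse v_mult v_inverse)

lemma v_uminus [simp]: "v (- x) = v x"
proof (cases "x = 0")
  case False
  have "v (-1) = 0"
    using v_mult[of "-1" "-1"] by simp
  with False show ?thesis
    using v_mult[of "-1" x] by simp
qed simp

lemma v_power: "x \<noteq> 0 \<Longrightarrow> v (x ^ n) = int n * v x"
  by (induction n) (auto simp: v_mult algebra_simps)

lemma vge_0 [simp]: "vge v k 0"
  by (simp add: vge_def)

lemma vge_1 [simp]: "vge v 0 1"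
  by (simp add: vge_def)

lemma vge_uminus [simp]: "vge v k (- x) \<longleftrightarrow> vge v k x"
  by (simp add: vge_def)

lemma vge_add: "vge v k x \<Longrightarrow> vge v k y \<Longrightarrow> vge v k (x + y)"
  using v_add[of x y] by (cases "x = 0"; cases "y = 0"; cases "x + y = 0") (auto simp: vge_def)

lemma vge_diff: "vge v k x \<Longrightarrow> vge v k y \<Longrightarrow> vge v k (x - y)"
  using vge_add[of k x "- y"] by simp

lemma vge_mult: "vge v k x \<Longrightarrow> vge v l y \<Longrightarrow> vge v (k + l) (x * y)"
  by (cases "x = 0"; cases "y = 0") (auto simp: vge_def v_mult)

lemma vge_0_mult: "vge v 0 x \<Longrightarrow> vge v 0 y \<Longrightarrow> vge v 0 (x * y)"
  using vge_mult[of 0 x 0 y] by simp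

lemma vge_divide: "a \<noteq> 0 \<Longrightarrow> vge v (v a) c \<Longrightarrow> vge v 0 (c / a)"
  by (cases "c = 0") (auto simp: vge_def v_divide)

lemma val_ring_eq: "val_ring v = {x. vge v 0 x}"
  by (auto simp: val_ring_def vge_def)

end

section \<open>\<open>2 \<times> 2\<close> matrices\<close>

definition mat2_mult :: "'a::field mat2 \<Rightarrow> 'a mat2 \<Rightarrow> 'a mat2" where
  "mat2_mult X Y = (case X of (a, b, c, d) \<Rightarrow> case Y of (a', b', c', d') \<Rightarrow>
     (a * a' + b * c', a * b' + b * d', c * a' + d * c', c * b' + d * d'))"

definition mat2_inv :: "'a::field mat2 \<Rightarrow> 'a mat2" where
  "mat2_inv X = (case X of (a, b, c, d) \<Rightarrow>
     (d / mat2_det X, - b / mat2_det X, - c / mat2_det X, a / mat2_det X))"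

definition mat2_smult :: "'a::field \<Rightarrow> 'a mat2 \<Rightarrow> 'a mat2" where
  "mat2_smult k X = (case X of (a, b, c, d) \<Rightarrow> (k * a, k * b, k * c, k * d))"

definition mat2_one :: "'a::field mat2" where
  "mat2_one = (1, 0, 0, 1)"

definition mat2_diag :: "'a::field \<Rightarrow> 'a mat2" where
  "mat2_diag t = (1, 0, 0, t)"

definition mat2_swap :: "'a::field mat2" where
  "mat2_swap = (0, 1, 1, 0)"

lemma mat2_diag_mult: "mat2_mult (mat2_diag s) (mat2_diag t) = mat2_diag (s * t)"
  by (simp add: mat2_diag_def mat2_mult_def)

lemma mat2_det_simp [simp]: "mat2_det (a, b, c, d) = a * d - b * c"
  by (simp add: mat2_det_def)

lemma mat2_apply_simp [simp]: "mat2_apply (a, b, c, d) (x, y) = (a * x + b * y, c * x + d * y)"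
  by (simp add: mat2_apply_def)

lemma mat2_mult_simp [simp]:
  "mat2_mult (a, b, c, d) (a', b', c', d') =
     (a * a' + b * c', a * b' + b * d', c * a' + d * c', c * b' + d * d')"
  by (simp add: mat2_mult_def)

lemma mat2_inv_simp [simp]:
  "mat2_inv (a, b, c, d) =
     (d / (a * d - b * c), - b / (a * d - b * c), - c / (a * d - b * c), a / (a * d - b * c))"
  by (simp add: mat2_inv_def)

lemma mat2_smult_simp [simp]: "mat2_smult k (a, b, c, d) = (k * a, k * b, k * c, k * d)"
  by (simp add: mat2_smult_def)

lemma mat2_mult_assoc: "mat2_mult (mat2_mult X Y) Z = mat2_mult X (mat2_mult Y Z)"
  by (cases X rule: prod_cases4; cases Y rule: prod_cases4; cases Z rule: prod_cases4)
     (simp add: algebra_simps)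

lemma mat2_mult_one_left [simp]: "mat2_mult mat2_one X = X"
  and mat2_mult_one_right [simp]: "mat2_mult X mat2_one = X"
  by (cases X rule: prod_cases4, simp add: mat2_one_def)+

lemma mat2_det_one [simp]: "mat2_det (mat2_one :: 'a::field mat2) = 1"
  by (simp add: mat2_one_def)

lemma mat2_det_mult: "mat2_det (mat2_mult X Y) = mat2_det X * mat2_det Y"
  by (cases X rule: prod_cases4; cases Y rule: prod_cases4) (simp add: algebra_simps)

lemma mat2_det_smult: "mat2_det (mat2_smult k X) = k * k * mat2_det X"
  by (cases X rule: prod_cases4) (simp add: algebra_simps)

lemma mat2_det_inv: "mat2_det (mat2_inv X) = inverse (mat2_det X)"
proof (cases X rule: prod_cases4)
  case (fields a b c d)
  define D where "D = a * d - b * c"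
  have "d / D * (a / D) - - b / D * (- c / D) = D / (D * D)"
    by (simp add: D_def algebra_simps diff_divide_distrib)
  also have "\<dots> = inverse D"
    by (cases "D = 0") (simp_all add: field_simps)
  finally show ?thesis
    by (simp add: fields D_def)
qed

lemma mat2_inv_left: "mat2_det X \<noteq> 0 \<Longrightarrow> mat2_mult (mat2_inv X) X = mat2_one"
  and mat2_inv_right: "mat2_det X \<noteq> 0 \<Longrightarrow> mat2_mult X (mat2_inv X) = mat2_one"
  by (cases X rule: prod_cases4, simp add: mat2_one_def add_divide_distrib[symmetric]
      diff_divide_distrib[symmetric] algebra_simps)+

lemma mat2_inv_unique: "mat2_det X \<noteq> 0 \<Longrightarrow> mat2_mult Y X = mat2_one \<Longrightarrow> Y = mat2_inv X"
  by (metis mat2_inv_right mat2_mult_assoc mat2_mult_one_left mat2_mult_one_right)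

lemma mat2_inv_mult:
  "mat2_det X \<noteq> 0 \<Longrightarrow> mat2_det Y \<noteq> 0 \<Longrightarrow>
     mat2_inv (mat2_mult X Y) = mat2_mult (mat2_inv Y) (mat2_inv X)"
  by (rule mat2_inv_unique[symmetric])
     (simp_all add: mat2_det_mult mat2_mult_assoc mat2_inv_left
        flip: mat2_mult_assoc[of "mat2_inv X"])

lemma mat2_inv_inv: "mat2_det X \<noteq> 0 \<Longrightarrow> mat2_inv (mat2_inv X) = X"
  by (metis mat2_det_inv inverse_zero_imp_zero mat2_inv_right mat2_inv_unique)

lemma mat2_mult_smult_left: "mat2_mult (mat2_smult k X) Y = mat2_smult k (mat2_mult X Y)"
  and mat2_mult_smult_right: "mat2_mult X (mat2_smult k Y) = mat2_smult k (mat2_mult X Y)"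
  by (cases X rule: prod_cases4, cases Y rule: prod_cases4, simp add: algebra_simps)+

lemma mat2_smult_smult: "mat2_smult k (mat2_smult l X) = mat2_smult (k * l) X"
  by (cases X rule: prod_cases4) (simp add: algebra_simps)

lemma mat2_inv_one [simp]: "mat2_inv (mat2_one :: 'a::field mat2) = mat2_one"
  by (simp add: mat2_one_def)

lemma mat2_smult_one [simp]: "mat2_smult 1 X = X"
  by (cases X rule: prod_cases4) simp

lemma mat2_inv_smult:
  "k \<noteq> 0 \<Longrightarrow> mat2_det X \<noteq> 0 \<Longrightarrow> mat2_inv (mat2_smult k X) = mat2_smult (inverse k) (mat2_inv X)"
  by (rule mat2_inv_unique[symmetric])
     (simp_all add: mat2_det_smult mat2_mult_smult_left mat2_mult_smult_right mat2_smult_smult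
        mat2_inv_left mat2_one_def)

lemma mat2_apply_mult: "mat2_apply (mat2_mult X Y) z = mat2_apply X (mat2_apply Y z)"
  by (cases X rule: prod_cases4; cases Y rule: prod_cases4; cases z) (simp add: algebra_simps)

lemma mat2_apply_one [simp]: "mat2_apply mat2_one z = z"
  by (cases z) (simp add: mat2_one_def)

lemma mat2_apply_inv_left: "mat2_det X \<noteq> 0 \<Longrightarrow> mat2_apply (mat2_inv X) (mat2_apply X z) = z"
  and mat2_apply_inv_right: "mat2_det X \<noteq> 0 \<Longrightarrow> mat2_apply X (mat2_apply (mat2_inv X) z) = z"
  by (simp_all add: mat2_apply_mult[symmetric] mat2_inv_left mat2_inv_right)

lemma inj_mat2_apply: "mat2_det X \<noteq> 0 \<Longrightarrow> inj (mat2_apply X)"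
  by (metis injI mat2_apply_inv_left)

section \<open>The Cartan index\<close>

definition mat2_vge :: "('a::field \<Rightarrow> int) \<Rightarrow> int \<Rightarrow> 'a mat2 \<Rightarrow> bool" where
  "mat2_vge v k X = (case X of (a, b, c, d) \<Rightarrow> vge v k a \<and> vge v k b \<and> vge v k c \<and> vge v k d)"

definition mat2_val :: "('a::field \<Rightarrow> int) \<Rightarrow> 'a mat2 \<Rightarrow> int" where
  "mat2_val v X = (case X of (a, b, c, d) \<Rightarrow> Min (v ` ({a, b, c, d} - {0})))"

text \<open>For \<open>X = c P diag(1, t) Q\<close> with \<open>P, Q \<in> GL\<^sub>2(\<o>)\<close> and \<open>v t \<ge> 0\<close> this is \<open>v t\<close>, the
  distance between the vertices of \<open>\<o>\<^sup>2\<close> and \<open>X \<o>\<^sup>2\<close>.\<close>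
definition cartan_index :: "('a::field \<Rightarrow> int) \<Rightarrow> 'a mat2 \<Rightarrow> int" where
  "cartan_index v X = v (mat2_det X) - 2 * mat2_val v X"

definition unimodular :: "('a::field \<Rightarrow> int) \<Rightarrow> 'a mat2 \<Rightarrow> bool" where
  "unimodular v U \<longleftrightarrow> mat2_det U \<noteq> 0 \<and> mat2_vge v 0 U \<and> mat2_vge v 0 (mat2_inv U)"

lemma mat2_vge_simp [simp]:
  "mat2_vge v k (a, b, c, d) \<longleftrightarrow> vge v k a \<and> vge v k b \<and> vge v k c \<and> vge v k d"
  by (simp add: mat2_vge_def)

lemma mat2_val_simp: "mat2_val v (a, b, c, d) = Min (v ` ({a, b, c, d} - {0}))"
  by (simp add: mat2_val_def)

lemma mat2_inv_eq_smult:
  "mat2_inv (a, b, c, d) = mat2_smult (inverse (a * d - b * c)) (d, - b, - c, a)"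
  by (simp add: divide_inverse mult.commute)

context discretely_valued
begin

lemma vge_mult_iff: "c \<noteq> 0 \<Longrightarrow> vge v k (c * x) \<longleftrightarrow> vge v (k - v c) x"
  by (cases "x = 0") (auto simp: vge_def v_mult)

lemma mat2_vge_mult: "mat2_vge v k X \<Longrightarrow> mat2_vge v l Y \<Longrightarrow> mat2_vge v (k + l) (mat2_mult X Y)"
  by (cases X rule: prod_cases4; cases Y rule: prod_cases4) (simp add: vge_add vge_mult)

lemma mat2_vge_det:
  assumes "mat2_vge v k X"
  shows "vge v (2 * k) (mat2_det X)"
proof (cases X rule: prod_cases4)
  case (fields a b c d)
  with assms have "vge v (2 * k) (a * d)" "vge v (2 * k) (b * c)"
    using vge_mult[of k a k d] vge_mult[of k b k c] by simp_all
  then show ?thesis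
    by (simp add: fields vge_diff)
qed

lemma mat2_vge_smult_iff: "c \<noteq> 0 \<Longrightarrow> mat2_vge v k (mat2_smult c X) \<longleftrightarrow> mat2_vge v (k - v c) X"
  by (cases X rule: prod_cases4) (simp add: vge_mult_iff)

lemma mat2_vge_inv_iff:
  "mat2_det X \<noteq> 0 \<Longrightarrow>
     mat2_vge v k (mat2_inv X) \<longleftrightarrow> mat2_vge v (k + v (mat2_det X)) X"
proof (cases X rule: prod_cases4)
  case (fields a b c d)
  assume "mat2_det X \<noteq> 0"
  then show ?thesis
    unfolding fields mat2_inv_eq_smult
    by (simp add: mat2_vge_smult_iff v_inverse conj_ac del: mat2_smult_simp)
qed

lemma mat2_vge_iff_le_val:
  assumes "mat2_det X \<noteq> 0"
  shows "mat2_vge v k X \<longleftrightarrow> k \<le> mat2_val v X"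
proof (cases X rule: prod_cases4)
  case (fields a b c d)
  let ?S = "v ` ({a, b, c, d} - {0})"
  have "?S \<noteq> {}"
    using assms fields by auto
  then have "k \<le> Min ?S \<longleftrightarrow> (\<forall>s \<in> ?S. k \<le> s)"
    by simp
  then show ?thesis
    by (auto simp: fields mat2_val_simp vge_def)
qed

lemma mat2_vge_val: "mat2_det X \<noteq> 0 \<Longrightarrow> mat2_vge v (mat2_val v X) X"
  by (simp add: mat2_vge_iff_le_val)

lemma mat2_val_attained:
  assumes "mat2_det (a, b, c, d) \<noteq> 0"
  obtains "a \<noteq> 0" "v a = mat2_val v (a, b, c, d)" | "b \<noteq> 0" "v b = mat2_val v (a, b, c, d)"
    | "c \<noteq> 0" "v c = mat2_val v (a, b, c, d)" | "d \<noteq> 0" "v d = mat2_val v (a, b, c, d)"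
proof -
  let ?S = "v ` ({a, b, c, d} - {0})"
  have "?S \<noteq> {}"
    using assms by auto
  then have "Min ?S \<in> ?S"
    by (intro Min_in) simp_all
  then obtain x where "x \<in> {a, b, c, d} - {0}" "Min ?S = v x"
    by (rule imageE)
  then show ?thesis
    using that unfolding mat2_val_simp by auto
qed

lemma mat2_val_eqI:
  assumes "mat2_det X \<noteq> 0" "\<And>k. mat2_vge v k X \<longleftrightarrow> k \<le> m"
  shows "mat2_val v X = m"
  using assms mat2_vge_iff_le_val by (metis order.antisym order.refl)

lemma mat2_val_smult: "c \<noteq> 0 \<Longrightarrow> mat2_det X \<noteq> 0 \<Longrightarrow> mat2_val v (mat2_smult c X) = v c + mat2_val v X"
  by (rule mat2_val_eqI)
     (simp_all add: mat2_det_smult mat2_vge_smult_iff mat2_vge_iff_le_val[of X] algebra_simps)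

lemma mat2_val_inv: "mat2_det X \<noteq> 0 \<Longrightarrow> mat2_val v (mat2_inv X) = mat2_val v X - v (mat2_det X)"
  by (rule mat2_val_eqI)
     (simp_all add: mat2_det_inv mat2_vge_inv_iff mat2_vge_iff_le_val[of X] algebra_simps)

lemma cartan_index_nonneg: "mat2_det X \<noteq> 0 \<Longrightarrow> 0 \<le> cartan_index v X"
  using mat2_vge_det[OF mat2_vge_val] by (auto simp: cartan_index_def vge_def)

lemma cartan_index_mult:
  assumes "mat2_det X \<noteq> 0" "mat2_det Y \<noteq> 0"
  shows "cartan_index v (mat2_mult X Y) \<le> cartan_index v X + cartan_index v Y"
proof -
  have "mat2_vge v (mat2_val v X + mat2_val v Y) (mat2_mult X Y)"
    using assms by (intro mat2_vge_mult mat2_vge_val)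
  then have "mat2_val v X + mat2_val v Y \<le> mat2_val v (mat2_mult X Y)"
    using assms by (simp add: mat2_vge_iff_le_val mat2_det_mult)
  then show ?thesis
    using assms by (simp add: cartan_index_def mat2_det_mult v_mult)
qed

lemma cartan_index_inv: "mat2_det X \<noteq> 0 \<Longrightarrow> cartan_index v (mat2_inv X) = cartan_index v X"
  by (simp add: cartan_index_def mat2_val_inv mat2_det_inv v_inverse)

lemma cartan_index_smult: "c \<noteq> 0 \<Longrightarrow> mat2_det X \<noteq> 0 \<Longrightarrow> cartan_index v (mat2_smult c X) = cartan_index v X"
  by (simp add: cartan_index_def mat2_val_smult mat2_det_smult v_mult)

lemma cartan_index_diag:
  assumes "t \<noteq> 0" "0 \<le> v t"
  shows "cartan_index v (mat2_diag t) = v t"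
proof -
  have "mat2_val v (mat2_diag t) = 0"
    using assms by (intro mat2_val_eqI) (auto simp: mat2_diag_def vge_def)
  then show ?thesis
    by (simp add: cartan_index_def mat2_diag_def)
qed

lemma cartan_index_le_one:
  assumes "mat2_det C \<noteq> 0" "p \<noteq> 0" "v p = 1"
    and "mat2_vge v 0 C" "mat2_vge v 0 (mat2_smult p (mat2_inv C))"
  shows "cartan_index v C \<le> 1"
proof -
  have "mat2_vge v (- 1) (mat2_inv C)"
    using assms(2,3,5) by (simp add: mat2_vge_smult_iff)
  then have "- 1 \<le> mat2_val v C - v (mat2_det C)"
    using assms(1) by (simp add: mat2_vge_iff_le_val mat2_det_inv mat2_val_inv)
  moreover have "0 \<le> mat2_val v C"
    using assms(1,4) by (simp add: mat2_vge_iff_le_val)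
  ultimately show ?thesis
    by (simp add: cartan_index_def)
qed

lemma unimodular_one: "unimodular v mat2_one"
  by (simp add: unimodular_def mat2_one_def)

lemma unimodular_diag: "u \<noteq> 0 \<Longrightarrow> v u = 0 \<Longrightarrow> unimodular v (mat2_diag u)"
  by (simp add: unimodular_def mat2_diag_def vge_def v_divide)

lemma unimodular_inv: "unimodular v U \<Longrightarrow> unimodular v (mat2_inv U)"
  by (simp add: unimodular_def mat2_inv_inv mat2_det_inv)

lemma unimodular_mult: "unimodular v U \<Longrightarrow> unimodular v W \<Longrightarrow> unimodular v (mat2_mult U W)"
  using mat2_vge_mult[of 0 _ 0] by (auto simp: unimodular_def mat2_det_mult mat2_inv_mult)

lemma cartan_index_unimodular:
  assumes "unimodular v U"
  shows "cartan_index v U = 0"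
proof -
  have U: "mat2_det U \<noteq> 0" "mat2_vge v 0 U" "mat2_vge v 0 (mat2_inv U)"
    using assms by (auto simp: unimodular_def)
  have "vge v 0 (mat2_det U)" "vge v 0 (mat2_det (mat2_inv U))"
    using mat2_vge_det[OF U(2)] mat2_vge_det[OF U(3)] by simp_all
  then have "v (mat2_det U) = 0"
    using U(1) by (simp add: vge_def mat2_det_inv v_inverse)
  moreover have "0 \<le> mat2_val v U"
    using U by (simp add: mat2_vge_iff_le_val)
  ultimately show ?thesis
    using cartan_index_nonneg[OF U(1)] by (simp add: cartan_index_def)
qed

lemma cartan_index_mult_index_zero:
  assumes "cartan_index v Z = 0" "mat2_det Z \<noteq> 0" "mat2_det X \<noteq> 0"
  shows "cartan_index v (mat2_mult Z X) = cartan_index v X"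
    and "cartan_index v (mat2_mult X Z) = cartan_index v X"
proof -
  have Z': "mat2_det (mat2_inv Z) \<noteq> 0" "cartan_index v (mat2_inv Z) = 0"
    using assms by (simp_all add: mat2_det_inv cartan_index_inv)
  have ZX: "mat2_det (mat2_mult Z X) \<noteq> 0" "mat2_det (mat2_mult X Z) \<noteq> 0"
    using assms by (simp_all add: mat2_det_mult)
  have "X = mat2_mult (mat2_inv Z) (mat2_mult Z X)" "X = mat2_mult (mat2_mult X Z) (mat2_inv Z)"
    using assms by (simp_all add: mat2_inv_left mat2_inv_right flip: mat2_mult_assoc)
      (simp add: mat2_mult_assoc mat2_inv_right)
  then have "cartan_index v X \<le> cartan_index v (mat2_mult Z X)"
    "cartan_index v X \<le> cartan_index v (mat2_mult X Z)"
    using cartan_index_mult[OF Z'(1) ZX(1)] cartan_index_mult[OF ZX(2) Z'(1)] Z'(2) by simp_all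
  then show "cartan_index v (mat2_mult Z X) = cartan_index v X"
    "cartan_index v (mat2_mult X Z) = cartan_index v X"
    using cartan_index_mult[of Z X] cartan_index_mult[of X Z] assms by simp_all
qed

end

section \<open>Cartan decomposition\<close>

definition cartan_decomposable :: "('a::field \<Rightarrow> int) \<Rightarrow> 'a mat2 \<Rightarrow> bool" where
  "cartan_decomposable v C \<longleftrightarrow> (\<exists>c P Q t. c \<noteq> 0 \<and> unimodular v P \<and> unimodular v Q \<and>
     t \<noteq> 0 \<and> 0 \<le> v t \<and> C = mat2_smult c (mat2_mult (mat2_mult P (mat2_diag t)) Q))"

context discretely_valued
begin

lemma unimodular_lower: "vge v 0 x \<Longrightarrow> unimodular v (1, 0, x, 1)"
  and unimodular_upper: "vge v 0 x \<Longrightarrow> unimodular v (1, x, 0, 1)"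
  and unimodular_swap: "unimodular v mat2_swap"
  by (simp_all add: unimodular_def mat2_swap_def)

lemma cartan_decomposable_pivot:
  assumes "a \<noteq> 0" "a * d - b * c \<noteq> 0" "vge v (v a) b" "vge v (v a) c" "vge v (v a) d"
  shows "cartan_decomposable v (a, b, c, d)"
proof -
  define t where "t = (a * d - b * c) / (a * a)"
  have "vge v (2 * v a) (a * d)" "vge v (2 * v a) (b * c)"
    using vge_mult[of "v a" b "v a" c] vge_mult[of "v a" a "v a" d] assms(1,3-5)
    by (simp_all add: vge_def)
  then have "vge v (2 * v a) (a * d - b * c)"
    by (rule vge_diff)
  then have "0 \<le> v t"
    using assms(1,2) by (simp add: t_def vge_def v_divide v_mult)
  moreover have "(a, b, c, d) =
      mat2_smult a (mat2_mult (mat2_mult (1, 0, c / a, 1) (mat2_diag t)) (1, b / a, 0, 1))"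
    using assms(1) by (simp add: mat2_diag_def t_def field_simps)
  ultimately show ?thesis
    unfolding cartan_decomposable_def
    using assms unimodular_lower[OF vge_divide] unimodular_upper[OF vge_divide]
    by (intro exI[of _ a] exI[of _ "(1, 0, c / a, 1)"] exI[of _ "(1, b / a, 0, 1)"] exI[of _ t])
       (simp add: t_def)
qed

lemma cartan_decomposable_transfer:
  assumes "unimodular v P\<^sub>0" "unimodular v Q\<^sub>0"
    and "cartan_decomposable v (mat2_mult (mat2_mult P\<^sub>0 C) Q\<^sub>0)"
  shows "cartan_decomposable v C"
proof -
  obtain c P Q t where h: "c \<noteq> 0" "unimodular v P" "unimodular v Q" "t \<noteq> 0" "0 \<le> v t"
    "mat2_mult (mat2_mult P\<^sub>0 C) Q\<^sub>0 = mat2_smult c (mat2_mult (mat2_mult P (mat2_diag t)) Q)"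
    using assms(3) unfolding cartan_decomposable_def by blast
  have det: "mat2_det P\<^sub>0 \<noteq> 0" "mat2_det Q\<^sub>0 \<noteq> 0"
    using assms(1,2) by (simp_all add: unimodular_def)
  have "C = mat2_mult (mat2_mult (mat2_inv P\<^sub>0) (mat2_mult (mat2_mult P\<^sub>0 C) Q\<^sub>0)) (mat2_inv Q\<^sub>0)"
    using det by (simp add: mat2_mult_assoc mat2_inv_right)
      (simp add: mat2_inv_left flip: mat2_mult_assoc)
  also have "\<dots> = mat2_smult c (mat2_mult (mat2_mult (mat2_mult (mat2_inv P\<^sub>0) P) (mat2_diag t))
      (mat2_mult Q (mat2_inv Q\<^sub>0)))"
    unfolding h(6) by (simp add: mat2_mult_smult_left mat2_mult_smult_right mat2_mult_assoc)
  finally show ?thesis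
    unfolding cartan_decomposable_def
    using h(1,4,5) unimodular_mult[OF unimodular_inv[OF assms(1)] h(2)]
      unimodular_mult[OF h(3) unimodular_inv[OF assms(2)]] by blast
qed

lemma cartan_decomposition:
  assumes "mat2_det C \<noteq> 0"
  shows "cartan_decomposable v C"
proof (cases C rule: prod_cases4)
  case (fields a b c d)
  have entries: "vge v (mat2_val v C) a" "vge v (mat2_val v C) b"
    "vge v (mat2_val v C) c" "vge v (mat2_val v C) d"
    using mat2_vge_val[OF assms] fields by simp_all
  have det: "a * d - b * c \<noteq> 0" "b * c - a * d \<noteq> 0" "c * b - d * a \<noteq> 0" "d * a - c * b \<noteq> 0"
    using assms fields by (simp_all add: mult.commute)
  have swap_right: "mat2_mult (mat2_mult mat2_one C) mat2_swap = (b, a, d, c)"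
    and swap_left: "mat2_mult (mat2_mult mat2_swap C) mat2_one = (c, d, a, b)"
    and swap_both: "mat2_mult (mat2_mult mat2_swap C) mat2_swap = (d, c, b, a)"
    by (simp_all add: fields mat2_swap_def)
  \<comment> \<open>swap rows and/or columns to move an entry of minimal valuation to the top left\<close>
  from assms[unfolded fields] show ?thesis
  proof (cases rule: mat2_val_attained)
    case 1
    then show ?thesis
      using cartan_decomposable_pivot[of a d b c] entries det fields by simp
  next
    case 2
    then have "cartan_decomposable v (b, a, d, c)"
      using cartan_decomposable_pivot[of b c a d] entries det fields by simp
    then show ?thesis
      using cartan_decomposable_transfer[OF unimodular_one unimodular_swap] swap_right by simp
  next
    case 3
    then have "cartan_decomposable v (c, d, a, b)"
      using cartan_decomposable_pivot[of c b d a] entries det fields by simp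
    then show ?thesis
      using cartan_decomposable_transfer[OF unimodular_swap unimodular_one] swap_left by simp
  next
    case 4
    then have "cartan_decomposable v (d, c, b, a)"
      using cartan_decomposable_pivot[of d a c b] entries det fields by simp
    then show ?thesis
      using cartan_decomposable_transfer[OF unimodular_swap unimodular_swap] swap_both by simp
  qed
qed

lemma cartan_decomposition_uniformizer:
  assumes "p \<noteq> 0" "v p = 1" "mat2_det C \<noteq> 0"
  obtains c P Q k where "c \<noteq> 0" "unimodular v P" "unimodular v Q"
    "C = mat2_smult c (mat2_mult (mat2_mult P (mat2_diag (p ^ k))) Q)"
proof -
  obtain c P Q t where PQ: "c \<noteq> 0" "unimodular v P" "unimodular v Q" "t \<noteq> 0" "0 \<le> v t"
    "C = mat2_smult c (mat2_mult (mat2_mult P (mat2_diag t)) Q)"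
    using cartan_decomposition[OF assms(3)] unfolding cartan_decomposable_def by blast
  define k where "k = nat (v t)"
  define u where "u = t / p ^ k"
  \<comment> \<open>\<open>t = p\<^sup>k u\<close> with \<open>u\<close> a unit, so \<open>diag(1, u)\<close> is absorbed into \<open>Q\<close>\<close>
  have "u \<noteq> 0" "v u = 0"
    using PQ(4,5) assms(1,2) by (simp_all add: u_def k_def v_divide v_power)
  then have "unimodular v (mat2_mult (mat2_diag u) Q)"
    using PQ(3) by (intro unimodular_mult unimodular_diag)
  moreover have "mat2_diag t = mat2_mult (mat2_diag (p ^ k)) (mat2_diag u)"
    using assms(1) by (simp add: mat2_diag_mult u_def)
  then have "C = mat2_smult c (mat2_mult (mat2_mult P (mat2_diag (p ^ k))) (mat2_mult (mat2_diag u) Q))"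
    by (simp add: PQ(6) mat2_mult_assoc)
  ultimately show ?thesis
    using that PQ(1,2) by blast
qed

end

section \<open>Lattices and vertices\<close>

definition std_lattice :: "('a::field \<Rightarrow> int) \<Rightarrow> ('a \<times> 'a) set" where
  "std_lattice v = val_ring v \<times> val_ring v"

definition lattice_of :: "('a::field \<Rightarrow> int) \<Rightarrow> 'a mat2 \<Rightarrow> ('a \<times> 'a) set" where
  "lattice_of v A = mat2_apply A ` std_lattice v"

definition vertex_of :: "('a::field \<Rightarrow> int) \<Rightarrow> 'a mat2 \<Rightarrow> ('a \<times> 'a) set set" where
  "vertex_of v A = lat_class v (lattice_of v A)"

lemma is_lattice_iff: "is_lattice v L \<longleftrightarrow> (\<exists>A. mat2_det A \<noteq> 0 \<and> L = lattice_of v A)"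
proof -
  have span: "lattice_of v (u1, w1, u2, w2) =
      {(a * u1 + b * w1, a * u2 + b * w2) | a b. a \<in> val_ring v \<and> b \<in> val_ring v}"
    for u1 u2 w1 w2 :: 'a
    unfolding lattice_of_def std_lattice_def by (auto simp: image_def algebra_simps; blast)
  show ?thesis
  proof
    assume "is_lattice v L"
    then obtain u1 u2 w1 w2 where "u1 * w2 - u2 * w1 \<noteq> 0"
      "L = {(a * u1 + b * w1, a * u2 + b * w2) | a b. a \<in> val_ring v \<and> b \<in> val_ring v}"
      unfolding is_lattice_def by blast
    then show "\<exists>A. mat2_det A \<noteq> 0 \<and> L = lattice_of v A"
      by (intro exI[of _ "(u1, w1, u2, w2)"]) (simp add: span mult.commute)
  next
    assume "\<exists>A. mat2_det A \<noteq> 0 \<and> L = lattice_of v A"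
    then obtain u1 w1 u2 w2 where "mat2_det (u1, w1, u2, w2) \<noteq> 0" "L = lattice_of v (u1, w1, u2, w2)"
      by (metis prod_cases4)
    then show "is_lattice v L"
      unfolding is_lattice_def span by (intro exI) (simp add: mult.commute)
  qed
qed

lemma BT_vertices_iff: "x \<in> BT_vertices v \<longleftrightarrow> (\<exists>A. mat2_det A \<noteq> 0 \<and> x = vertex_of v A)"
  unfolding BT_vertices_def vertex_of_def is_lattice_iff by blast

lemma image_lattice_of: "mat2_apply M ` lattice_of v A = lattice_of v (mat2_mult M A)"
  by (simp add: lattice_of_def image_image mat2_apply_mult)

lemma scale_lat_lattice_of: "scale_lat c (lattice_of v A) = lattice_of v (mat2_smult c A)"
  unfolding scale_lat_def lattice_of_def image_image
  by (intro image_cong refl) (cases A rule: prod_cases4, auto simp: algebra_simps)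

lemma vertex_of_eq: "vertex_of v A = {lattice_of v (mat2_smult c A) | c. c \<noteq> 0}"
  unfolding vertex_of_def lat_class_def scale_lat_lattice_of by blast

lemma lattice_of_in_vertex_of: "lattice_of v A \<in> vertex_of v A"
  unfolding vertex_of_eq by (auto intro: exI[of _ 1])

lemma vertex_of_smult:
  assumes "c \<noteq> 0"
  shows "vertex_of v (mat2_smult c A) = vertex_of v A"
proof -
  have "lattice_of v (mat2_smult d A) = lattice_of v (mat2_smult (d / c * c) A)" for d
    using assms by simp
  then show ?thesis
    unfolding vertex_of_eq mat2_smult_smult using assms by fastforce
qed

lemma GL2_act_vertex_of: "GL2_act_vertex M (vertex_of v A) = vertex_of v (mat2_mult M A)"
proof -
  have "lattice_of v (mat2_smult c (mat2_mult M A)) = mat2_apply M ` lattice_of v (mat2_smult c A)"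
    for c
    by (simp add: image_lattice_of mat2_mult_smult_right)
  then show ?thesis
    unfolding GL2_act_vertex_def vertex_of_eq by auto
qed

context discretely_valued
begin

lemma std_lattice_iff: "(x, y) \<in> std_lattice v \<longleftrightarrow> vge v 0 x \<and> vge v 0 y"
  by (simp add: std_lattice_def val_ring_eq)

lemma mat2_apply_std_lattice:
  "mat2_vge v 0 X \<Longrightarrow> w \<in> std_lattice v \<Longrightarrow> mat2_apply X w \<in> std_lattice v"
  by (cases X rule: prod_cases4; cases w) (simp add: std_lattice_iff vge_add vge_0_mult)

lemma lattice_of_subset_iff:
  assumes "mat2_det A \<noteq> 0" "mat2_det B \<noteq> 0"
  shows "lattice_of v A \<subseteq> lattice_of v B \<longleftrightarrow> mat2_vge v 0 (mat2_mult (mat2_inv B) A)"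
proof
  assume sub: "lattice_of v A \<subseteq> lattice_of v B"
  have col: "mat2_apply (mat2_mult (mat2_inv B) A) w \<in> std_lattice v" if "w \<in> std_lattice v" for w
  proof -
    have "mat2_apply A w \<in> lattice_of v B"
      using sub that by (auto simp: lattice_of_def)
    then obtain u where "u \<in> std_lattice v" "mat2_apply A w = mat2_apply B u"
      by (auto simp: lattice_of_def)
    then show ?thesis
      using assms by (simp add: mat2_apply_mult mat2_apply_inv_left)
  qed
  obtain a b c d where X: "mat2_mult (mat2_inv B) A = (a, b, c, d)"
    by (cases "mat2_mult (mat2_inv B) A" rule: prod_cases4)
  have "(a, c) \<in> std_lattice v" "(b, d) \<in> std_lattice v"
    using col[of "(1, 0)"] col[of "(0, 1)"] by (simp_all add: X std_lattice_iff)
  then show "mat2_vge v 0 (mat2_mult (mat2_inv B) A)"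
    by (simp add: X std_lattice_iff)
next
  assume int: "mat2_vge v 0 (mat2_mult (mat2_inv B) A)"
  have "mat2_apply (mat2_mult (mat2_inv B) A) w \<in> std_lattice v" if "w \<in> std_lattice v" for w
    using int that by (rule mat2_apply_std_lattice)
  moreover have "mat2_apply A w = mat2_apply B (mat2_apply (mat2_mult (mat2_inv B) A) w)" for w
    using assms by (simp add: mat2_apply_mult mat2_apply_inv_right)
  ultimately show "lattice_of v A \<subseteq> lattice_of v B"
    unfolding lattice_of_def by (auto intro: image_eqI)
qed

lemma lattice_of_eq_imp_unimodular:
  assumes "mat2_det A \<noteq> 0" "mat2_det B \<noteq> 0" "lattice_of v A = lattice_of v B"
  shows "unimodular v (mat2_mult (mat2_inv B) A)"
proof -
  have "mat2_inv (mat2_mult (mat2_inv B) A) = mat2_mult (mat2_inv A) B"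
    using assms by (simp add: mat2_inv_mult mat2_det_inv mat2_inv_inv)
  then show ?thesis
    using assms lattice_of_subset_iff[of A B] lattice_of_subset_iff[of B A]
    by (simp add: unimodular_def mat2_det_mult mat2_det_inv)
qed

lemma lattice_of_mult_unimodular:
  assumes "unimodular v U" "mat2_det A \<noteq> 0"
  shows "lattice_of v (mat2_mult A U) = lattice_of v A"
proof -
  have dU: "mat2_det U \<noteq> 0"
    using assms by (simp add: unimodular_def)
  then have dAU: "mat2_det (mat2_mult A U) \<noteq> 0"
    using assms by (simp add: mat2_det_mult)
  have "mat2_mult (mat2_inv A) (mat2_mult A U) = U"
    using assms by (simp add: mat2_inv_left flip: mat2_mult_assoc)
  moreover have "mat2_mult (mat2_inv (mat2_mult A U)) A = mat2_inv U"
    using assms dU by (simp add: mat2_inv_mult mat2_mult_assoc mat2_inv_left)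
  ultimately show ?thesis
    using lattice_of_subset_iff[OF dAU assms(2)] lattice_of_subset_iff[OF assms(2) dAU] assms(1)
    by (auto simp: unimodular_def)
qed

lemma vertex_of_mult_unimodular:
  "unimodular v U \<Longrightarrow> mat2_det A \<noteq> 0 \<Longrightarrow> vertex_of v (mat2_mult A U) = vertex_of v A"
  by (simp add: vertex_of_def lattice_of_mult_unimodular)

lemma vertex_of_eqE:
  assumes "mat2_det A \<noteq> 0" "mat2_det A' \<noteq> 0" "vertex_of v A' = vertex_of v A"
  obtains c U where "c \<noteq> 0" "unimodular v U" "A' = mat2_smult c (mat2_mult A U)"
proof -
  have "lattice_of v A' \<in> vertex_of v A"
    using lattice_of_in_vertex_of[of v A'] assms(3) by simp
  then obtain c where c: "c \<noteq> 0" "lattice_of v A' = lattice_of v (mat2_smult c A)"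
    unfolding vertex_of_eq by blast
  define U where "U = mat2_mult (mat2_inv (mat2_smult c A)) A'"
  have dcA: "mat2_det (mat2_smult c A) \<noteq> 0"
    using c(1) assms(1) by (simp add: mat2_det_smult)
  have "unimodular v U"
    unfolding U_def using lattice_of_eq_imp_unimodular[OF assms(2) dcA c(2)] .
  moreover have "mat2_mult (mat2_smult c A) U = A'"
    using dcA by (simp add: U_def mat2_inv_right flip: mat2_mult_assoc)
  then have "A' = mat2_smult c (mat2_mult A U)"
    by (simp add: mat2_mult_smult_left)
  ultimately show ?thesis
    using that c(1) by blast
qed

lemma mem_vertex_imp_lattice_of:
  assumes "x \<in> BT_vertices v" "L \<in> x"
  obtains B where "mat2_det B \<noteq> 0" "L = lattice_of v B" "x = vertex_of v B"
proof -
  obtain A where A: "mat2_det A \<noteq> 0" "x = vertex_of v A"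
    using assms(1) unfolding BT_vertices_iff by blast
  then obtain c where c: "c \<noteq> 0" "L = lattice_of v (mat2_smult c A)"
    using assms(2) unfolding vertex_of_eq by blast
  then show ?thesis
    using that[of "mat2_smult c A"] A vertex_of_smult[OF c(1)] by (simp add: mat2_det_smult)
qed

lemma cartan_index_vertex_invariant:
  assumes "mat2_det A \<noteq> 0" "mat2_det A' \<noteq> 0" "mat2_det B \<noteq> 0" "mat2_det B' \<noteq> 0"
    and "vertex_of v A' = vertex_of v A" "vertex_of v B' = vertex_of v B"
  shows "cartan_index v (mat2_mult (mat2_inv A') B') = cartan_index v (mat2_mult (mat2_inv A) B)"
proof -
  obtain c U where U: "c \<noteq> 0" "unimodular v U" "A' = mat2_smult c (mat2_mult A U)"
    using vertex_of_eqE[OF assms(1,2,5)] .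
  obtain d W where W: "d \<noteq> 0" "unimodular v W" "B' = mat2_smult d (mat2_mult B W)"
    using vertex_of_eqE[OF assms(3,4,6)] .
  define X where "X = mat2_mult (mat2_inv A) B"
  have dX: "mat2_det X \<noteq> 0"
    using assms(1,3) by (simp add: X_def mat2_det_mult mat2_det_inv)
  have dU: "mat2_det U \<noteq> 0" "mat2_det W \<noteq> 0" "mat2_det (mat2_inv U) \<noteq> 0"
    using U(2) W(2) by (simp_all add: unimodular_def mat2_det_inv)
  have "mat2_mult (mat2_inv A') B' = mat2_smult (d * inverse c) (mat2_mult (mat2_mult (mat2_inv U) X) W)"
    using U W assms(1) dU
    by (simp add: X_def mat2_inv_smult mat2_det_mult mat2_inv_mult mat2_mult_smult_left
        mat2_mult_smult_right mat2_smult_smult mat2_mult_assoc)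
  also have "cartan_index v \<dots> = cartan_index v X"
    using U(1) W(1) dX dU
    by (simp add: cartan_index_smult mat2_det_mult cartan_index_unimodular unimodular_inv U(2) W(2)
        cartan_index_mult_index_zero)
  finally show ?thesis
    by (simp add: X_def)
qed

end

section \<open>The action of \<open>GL\<^sub>2(F)\<close> and the distance\<close>

lemma GL2_act_vertex_mult: "GL2_act_vertex M (GL2_act_vertex N x) = GL2_act_vertex (mat2_mult M N) x"
  by (simp add: GL2_act_vertex_def image_image mat2_apply_mult)

lemma GL2_act_vertex_one [simp]: "GL2_act_vertex mat2_one x = x"
  by (simp add: GL2_act_vertex_def)

lemma GL2_act_vertex_inv_left:
  "mat2_det M \<noteq> 0 \<Longrightarrow> GL2_act_vertex (mat2_inv M) (GL2_act_vertex M x) = x"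
  and GL2_act_vertex_inv_right:
  "mat2_det M \<noteq> 0 \<Longrightarrow> GL2_act_vertex M (GL2_act_vertex (mat2_inv M) x) = x"
  by (simp_all add: GL2_act_vertex_mult mat2_inv_left mat2_inv_right)

lemma GL2_act_vertex_in_BT_vertices:
  assumes "mat2_det M \<noteq> 0" "x \<in> BT_vertices v"
  shows "GL2_act_vertex M x \<in> BT_vertices v"
proof -
  obtain A where "mat2_det A \<noteq> 0" "x = vertex_of v A"
    using assms(2) unfolding BT_vertices_iff by blast
  then show ?thesis
    using assms(1) unfolding BT_vertices_iff
    by (intro exI[of _ "mat2_mult M A"]) (simp add: GL2_act_vertex_of mat2_det_mult)
qed

lemma scale_lat_image: "scale_lat p (mat2_apply M ` L) = mat2_apply M ` scale_lat p L"
  unfolding scale_lat_def image_image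
  by (intro image_cong refl) (cases M rule: prod_cases4, auto simp: algebra_simps)

lemma BT_adj_GL2_act:
  assumes "mat2_det M \<noteq> 0" "BT_adj v x y"
  shows "BT_adj v (GL2_act_vertex M x) (GL2_act_vertex M y)"
proof -
  obtain L L' p where h: "L \<in> x" "L' \<in> y" "p \<noteq> 0" "v p = 1"
    "scale_lat p L \<subset> L'" "L' \<subset> L"
    using assms(2) unfolding BT_adj_def by blast
  let ?M = "mat2_apply M"
  have strict: "A \<subset> B \<Longrightarrow> ?M ` A \<subset> ?M ` B" for A B
    using inj_mat2_apply[OF assms(1)] by (simp add: image_strict_mono inj_on_subset)
  have "scale_lat p (?M ` L) \<subset> ?M ` L'" "?M ` L' \<subset> ?M ` L"
    unfolding scale_lat_image using h(5,6) by (simp_all add: strict)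
  moreover have "?M ` L \<in> GL2_act_vertex M x" "?M ` L' \<in> GL2_act_vertex M y"
    using h(1,2) unfolding GL2_act_vertex_def by simp_all
  moreover have "x \<in> BT_vertices v" "y \<in> BT_vertices v"
    using assms(2) unfolding BT_adj_def by simp_all
  then have "GL2_act_vertex M x \<in> BT_vertices v" "GL2_act_vertex M y \<in> BT_vertices v"
    using GL2_act_vertex_in_BT_vertices[OF assms(1)] by simp_all
  ultimately show ?thesis
    unfolding BT_adj_def using h(3,4) by (intro conjI bexI exI) assumption+
qed

definition BT_path :: "('a::field \<Rightarrow> int) \<Rightarrow> nat \<Rightarrow> ('a \<times> 'a) set set \<Rightarrow> ('a \<times> 'a) set set \<Rightarrow> bool"
  where "BT_path v n x y \<longleftrightarrow> (\<exists>f. f 0 = x \<and> f n = y \<and> (\<forall>i<n. BT_adj v (f i) (f (Suc i))))"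

lemma BT_dist_eq_Least: "BT_dist v x y = (LEAST n. BT_path v n x y)"
  by (simp add: BT_dist_def BT_path_def)

lemma BT_path_0: "BT_path v 0 x y \<longleftrightarrow> x = y"
  by (auto simp: BT_path_def)

lemma BT_path_SucE:
  assumes "BT_path v (Suc n) x y"
  obtains z where "BT_path v n x z" "BT_adj v z y"
  using assms unfolding BT_path_def by (metis less_Suc_eq)

lemma BT_path_GL2_act:
  assumes "mat2_det M \<noteq> 0" "BT_path v n x y"
  shows "BT_path v n (GL2_act_vertex M x) (GL2_act_vertex M y)"
proof -
  obtain f where "f 0 = x" "f n = y" "\<forall>i<n. BT_adj v (f i) (f (Suc i))"
    using assms(2) unfolding BT_path_def by blast
  then show ?thesis
    unfolding BT_path_def using BT_adj_GL2_act[OF assms(1)]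
    by (intro exI[of _ "GL2_act_vertex M \<circ> f"]) simp
qed

lemma BT_path_GL2_act_iff:
  assumes "mat2_det M \<noteq> 0"
  shows "BT_path v n (GL2_act_vertex M x) (GL2_act_vertex M y) \<longleftrightarrow> BT_path v n x y"
proof
  assume "BT_path v n (GL2_act_vertex M x) (GL2_act_vertex M y)"
  moreover have "mat2_det (mat2_inv M) \<noteq> 0"
    using assms by (simp add: mat2_det_inv)
  ultimately show "BT_path v n x y"
    using BT_path_GL2_act[of "mat2_inv M"] by (metis GL2_act_vertex_inv_left[OF assms])
qed (rule BT_path_GL2_act[OF assms])

lemma BT_dist_GL2_act:
  "mat2_det M \<noteq> 0 \<Longrightarrow> BT_dist v (GL2_act_vertex M x) (GL2_act_vertex M y) = BT_dist v x y"
  by (simp add: BT_dist_eq_Least BT_path_GL2_act_iff)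

lemma GL2_act_vertex_in_G_hat:
  assumes "mat2_det M \<noteq> 0"
  shows "GL2_act_vertex M \<in> G_hat v e"
proof -
  have "mat2_det (mat2_inv M) \<noteq> 0"
    using assms by (simp add: mat2_det_inv)
  then have "bij_betw (GL2_act_vertex M) (BT_vertices v) (BT_vertices v)"
    using assms GL2_act_vertex_in_BT_vertices[of M] GL2_act_vertex_in_BT_vertices[of "mat2_inv M"]
    by (intro bij_betw_byWitness[where f' = "GL2_act_vertex (mat2_inv M)"])
       (auto simp: GL2_act_vertex_inv_left GL2_act_vertex_inv_right)
  then show ?thesis
    using assms BT_dist_GL2_act[OF assms] unfolding G_hat_def BT_Aut_def by blast
qed

context discretely_valued
begin

lemma cartan_index_triangle:
  assumes "mat2_det A \<noteq> 0" "mat2_det B \<noteq> 0" "mat2_det C \<noteq> 0"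
  shows "cartan_index v (mat2_mult (mat2_inv A) C)
    \<le> cartan_index v (mat2_mult (mat2_inv A) B) + cartan_index v (mat2_mult (mat2_inv B) C)"
proof -
  have "mat2_mult (mat2_inv A) C = mat2_mult (mat2_mult (mat2_inv A) B) (mat2_mult (mat2_inv B) C)"
    using assms(2) by (simp add: mat2_mult_assoc mat2_inv_right flip: mat2_mult_assoc[of B])
  then show ?thesis
    using assms cartan_index_mult by (simp add: mat2_det_mult mat2_det_inv)
qed

lemma cartan_index_BT_adj:
  assumes "mat2_det B\<^sub>1 \<noteq> 0" "mat2_det B\<^sub>2 \<noteq> 0"
    and "BT_adj v (vertex_of v B\<^sub>1) (vertex_of v B\<^sub>2)"
  shows "cartan_index v (mat2_mult (mat2_inv B\<^sub>1) B\<^sub>2) \<le> 1"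
proof -
  obtain L L' p where h: "L \<in> vertex_of v B\<^sub>1" "L' \<in> vertex_of v B\<^sub>2" "p \<noteq> 0" "v p = 1"
    "scale_lat p L \<subset> L'" "L' \<subset> L"
    and vertices: "vertex_of v B\<^sub>1 \<in> BT_vertices v" "vertex_of v B\<^sub>2 \<in> BT_vertices v"
    using assms(3) unfolding BT_adj_def by blast
  obtain C\<^sub>1 where C\<^sub>1: "mat2_det C\<^sub>1 \<noteq> 0" "L = lattice_of v C\<^sub>1" "vertex_of v B\<^sub>1 = vertex_of v C\<^sub>1"
    using mem_vertex_imp_lattice_of[OF vertices(1) h(1)] .
  obtain C\<^sub>2 where C\<^sub>2: "mat2_det C\<^sub>2 \<noteq> 0" "L' = lattice_of v C\<^sub>2" "vertex_of v B\<^sub>2 = vertex_of v C\<^sub>2"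
    using mem_vertex_imp_lattice_of[OF vertices(2) h(2)] .
  define C where "C = mat2_mult (mat2_inv C\<^sub>1) C\<^sub>2"
  have dC: "mat2_det C \<noteq> 0"
    using C\<^sub>1 C\<^sub>2 by (simp add: C_def mat2_det_mult mat2_det_inv)
  have "mat2_vge v 0 C"
    using h(6) C\<^sub>1 C\<^sub>2 lattice_of_subset_iff[of C\<^sub>2 C\<^sub>1] by (simp add: C_def psubset_eq)
  moreover have "mat2_vge v 0 (mat2_mult (mat2_inv C\<^sub>2) (mat2_smult p C\<^sub>1))"
    using h(3,5) C\<^sub>1 C\<^sub>2 lattice_of_subset_iff[of "mat2_smult p C\<^sub>1" C\<^sub>2]
    by (simp add: scale_lat_lattice_of mat2_det_smult psubset_eq)
  moreover have "mat2_mult (mat2_inv C\<^sub>2) (mat2_smult p C\<^sub>1) = mat2_smult p (mat2_inv C)"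
    using C\<^sub>1 C\<^sub>2 by (simp add: C_def mat2_inv_mult mat2_det_inv mat2_inv_inv mat2_mult_smult_right)
  ultimately have "cartan_index v C \<le> 1"
    using cartan_index_le_one[OF dC h(3,4)] by simp
  then show ?thesis
    using cartan_index_vertex_invariant[OF C\<^sub>1(1) assms(1) C\<^sub>2(1) assms(2)] C\<^sub>1(3) C\<^sub>2(3)
    by (simp add: C_def)
qed

lemma cartan_index_le_BT_path:
  assumes "mat2_det A \<noteq> 0"
  shows "mat2_det B \<noteq> 0 \<Longrightarrow> BT_path v n (vertex_of v A) (vertex_of v B) \<Longrightarrow>
    cartan_index v (mat2_mult (mat2_inv A) B) \<le> int n"
proof (induction n arbitrary: B)
  case 0
  then have "cartan_index v (mat2_mult (mat2_inv A) B) = cartan_index v (mat2_mult (mat2_inv A) A)"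
    using cartan_index_vertex_invariant[OF assms assms assms] by (simp add: BT_path_0)
  then show ?case
    using assms by (simp add: mat2_inv_left cartan_index_unimodular[OF unimodular_one])
next
  case (Suc n)
  obtain z where z: "BT_path v n (vertex_of v A) z" "BT_adj v z (vertex_of v B)"
    using Suc.prems(2) by (rule BT_path_SucE)
  then obtain B\<^sub>1 where B\<^sub>1: "mat2_det B\<^sub>1 \<noteq> 0" "z = vertex_of v B\<^sub>1"
    unfolding BT_adj_def BT_vertices_iff by blast
  have "cartan_index v (mat2_mult (mat2_inv A) B\<^sub>1) \<le> int n"
    using Suc.IH B\<^sub>1 z(1) by simp
  moreover have "cartan_index v (mat2_mult (mat2_inv B\<^sub>1) B) \<le> 1"
    using cartan_index_BT_adj[OF B\<^sub>1(1) Suc.prems(1)] z(2) B\<^sub>1(2) by simp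
  ultimately show ?case
    using cartan_index_triangle[OF assms B\<^sub>1(1) Suc.prems(1)] by simp
qed

lemma BT_adj_diag:
  assumes "p \<noteq> 0" "v p = 1" "q \<noteq> 0"
  shows "BT_adj v (vertex_of v (mat2_diag q)) (vertex_of v (mat2_diag (p * q)))"
proof -
  have not_integral: "\<not> vge v 0 (inverse p)"
    using assms(1,2) by (simp add: vge_def v_inverse)
  have det: "mat2_det (mat2_diag q) \<noteq> 0" "mat2_det (mat2_diag (p * q)) \<noteq> 0"
    "mat2_det (mat2_smult p (mat2_diag q)) \<noteq> 0"
    using assms by (simp_all add: mat2_diag_def)
  have p_integral: "vge v 0 p"
    using assms(2) by (simp add: vge_def)
  have e: "mat2_mult (mat2_inv (mat2_diag q)) (mat2_diag (p * q)) = (1, 0, 0, p)"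
    "mat2_mult (mat2_inv (mat2_diag (p * q))) (mat2_diag q) = (1, 0, 0, inverse p)"
    "mat2_mult (mat2_inv (mat2_diag (p * q))) (mat2_smult p (mat2_diag q)) = (p, 0, 0, 1)"
    "mat2_mult (mat2_inv (mat2_smult p (mat2_diag q))) (mat2_diag (p * q)) = (inverse p, 0, 0, 1)"
    using assms by (simp_all add: mat2_diag_def field_simps)
  have "lattice_of v (mat2_diag (p * q)) \<subset> lattice_of v (mat2_diag q)"
    using lattice_of_subset_iff[OF det(2,1)] lattice_of_subset_iff[OF det(1,2)] e(1,2)
      p_integral not_integral
    by (simp add: psubset_eq)
  moreover have "scale_lat p (lattice_of v (mat2_diag q)) \<subset> lattice_of v (mat2_diag (p * q))"
    unfolding scale_lat_lattice_of
    using lattice_of_subset_iff[OF det(3,2)] lattice_of_subset_iff[OF det(2,3)] e(3,4)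
      p_integral not_integral
    by (simp add: psubset_eq)
  moreover have "vertex_of v (mat2_diag q) \<in> BT_vertices v"
    "vertex_of v (mat2_diag (p * q)) \<in> BT_vertices v"
    using det(1,2) unfolding BT_vertices_iff by blast+
  ultimately show ?thesis
    unfolding BT_adj_def using lattice_of_in_vertex_of assms(1,2) by blast
qed

lemma BT_dist_diag_power:
  assumes "p \<noteq> 0" "v p = 1"
  shows "BT_dist v (vertex_of v mat2_one) (vertex_of v (mat2_diag (p ^ k))) = k"
proof -
  have one: "mat2_one = mat2_diag (p ^ 0)"
    by (simp add: mat2_one_def mat2_diag_def)
  have path: "BT_path v k (vertex_of v mat2_one) (vertex_of v (mat2_diag (p ^ k)))"
    unfolding BT_path_def one using BT_adj_diag[OF assms] assms(1)
    by (intro exI[of _ "\<lambda>i. vertex_of v (mat2_diag (p ^ i))"]) simp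
  have "cartan_index v (mat2_diag (p ^ k)) = int k"
    using assms by (simp add: cartan_index_diag v_power)
  moreover have "mat2_det (mat2_diag (p ^ k)) \<noteq> 0"
    using assms by (simp add: mat2_diag_def)
  ultimately have "int k \<le> int n"
    if "BT_path v n (vertex_of v mat2_one) (vertex_of v (mat2_diag (p ^ k)))" for n
    using cartan_index_le_BT_path[of mat2_one "mat2_diag (p ^ k)" n] that by simp
  then show ?thesis
    unfolding BT_dist_eq_Least using path by (intro Least_equality) auto
qed

lemma BT_vertex_pair_standard:
  assumes "p \<noteq> 0" "v p = 1" "x\<^sub>1 \<in> BT_vertices v" "x\<^sub>2 \<in> BT_vertices v"
  obtains M where "mat2_det M \<noteq> 0" "GL2_act_vertex M (vertex_of v mat2_one) = x\<^sub>1"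
    "GL2_act_vertex M (vertex_of v (mat2_diag (p ^ BT_dist v x\<^sub>1 x\<^sub>2))) = x\<^sub>2"
proof -
  obtain A B where A: "mat2_det A \<noteq> 0" "x\<^sub>1 = vertex_of v A"
    and B: "mat2_det B \<noteq> 0" "x\<^sub>2 = vertex_of v B"
    using assms(3,4) unfolding BT_vertices_iff by blast
  have "mat2_det (mat2_mult (mat2_inv A) B) \<noteq> 0"
    using A B by (simp add: mat2_det_mult mat2_det_inv)
  then obtain c P Q k where PQ: "c \<noteq> 0" "unimodular v P" "unimodular v Q"
    "mat2_mult (mat2_inv A) B = mat2_smult c (mat2_mult (mat2_mult P (mat2_diag (p ^ k))) Q)"
    using cartan_decomposition_uniformizer[OF assms(1,2)] by blast
  define M where "M = mat2_mult A P"
  define X where "X = mat2_mult M (mat2_diag (p ^ k))"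
  have dM: "mat2_det M \<noteq> 0" and dX: "mat2_det X \<noteq> 0"
    using A PQ(2) assms(1) by (simp_all add: M_def X_def mat2_det_mult unimodular_def mat2_diag_def)
  have "B = mat2_mult A (mat2_mult (mat2_inv A) B)"
    using A by (simp add: mat2_inv_right flip: mat2_mult_assoc)
  also have "\<dots> = mat2_smult c (mat2_mult X Q)"
    by (simp add: PQ(4) X_def M_def mat2_mult_smult_right mat2_mult_assoc)
  finally have x\<^sub>2: "x\<^sub>2 = GL2_act_vertex M (vertex_of v (mat2_diag (p ^ k)))"
    using B(2) PQ(1,3) dX
    by (simp add: vertex_of_smult vertex_of_mult_unimodular GL2_act_vertex_of X_def)
  have x\<^sub>1: "x\<^sub>1 = GL2_act_vertex M (vertex_of v mat2_one)"
    using A PQ(2) by (simp add: GL2_act_vertex_of M_def vertex_of_mult_unimodular)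
  have "BT_dist v x\<^sub>1 x\<^sub>2 = k"
    unfolding x\<^sub>1 x\<^sub>2 BT_dist_GL2_act[OF dM] using BT_dist_diag_power[OF assms(1,2)] .
  then show ?thesis
    using that dM x\<^sub>1 x\<^sub>2 by simp
qed

end

theorem mainTheorem6:
  fixes v :: "'a::field \<Rightarrow> int" and e :: nat
  assumes "nonarch_local_field v" and "e \<ge> 1"
    and "x1 \<in> BT_vertices v" and "x2 \<in> BT_vertices v"
    and "y1 \<in> BT_vertices v" and "y2 \<in> BT_vertices v"
    and "BT_dist v x1 x2 = BT_dist v y1 y2"
  shows "\<exists>g \<in> G_hat v e. g x1 = y1 \<and> g x2 = y2"
proof -
  interpret discretely_valued v
    using assms(1) by unfold_locales (simp add: nonarch_local_field_def)
  obtain p where p: "p \<noteq> 0" "v p = 1"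
    using v_surj by blast
  obtain M where M: "mat2_det M \<noteq> 0" "GL2_act_vertex M (vertex_of v mat2_one) = x1"
    "GL2_act_vertex M (vertex_of v (mat2_diag (p ^ BT_dist v x1 x2))) = x2"
    using BT_vertex_pair_standard[OF p assms(3,4)] .
  obtain N where N: "mat2_det N \<noteq> 0" "GL2_act_vertex N (vertex_of v mat2_one) = y1"
    "GL2_act_vertex N (vertex_of v (mat2_diag (p ^ BT_dist v x1 x2))) = y2"
    using BT_vertex_pair_standard[OF p assms(5,6)] assms(7) by metis
  let ?g = "GL2_act_vertex (mat2_mult N (mat2_inv M))"
  have "?g x1 = y1" "?g x2 = y2"
    using M N GL2_act_vertex_inv_left[OF M(1)] by (metis GL2_act_vertex_mult)+
  moreover have "?g \<in> G_hat v e"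
    using M(1) N(1) by (intro GL2_act_vertex_in_G_hat) (simp add: mat2_det_mult mat2_det_inv)
  ultimately show ?thesis
    by blast
qed

end
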